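(* Let $n\ge3$, $1\le k\le n$, and let $\Omega$ be an unbounded domain in $\mathbb{R}^n$ with smooth compact boundary. If $u$ is a smooth positive $k$-admissible solution of $\sigma_k^{1/k}(W[u])=\frac{n-2}{2}u^{\frac{n+2}{n-2}}$ in $\Omega$, then $u(x)\to0$ as $|x|\to\infty$.
   Context: $\sigma_k$ is the $k$th elementary symmetric function of eigenvalues; $\Gamma_k=\{\lambda:\sigma_j(\lambda)>0,\ j\le k\}$. For positive $C^2$ $u$, $W_{ij}[u]=(n-2)\partial_{ij}u-n\frac{\partial_iu\partial_ju}{u}+(\Delta u+\frac{|\nabla u|^2}{u})\delta_{ij}$; $u$ is $k$-admissible if $\lambda(W[u])\in\Gamma_k$ everywhere. *)

theory Defs
  imports "HOL-Analysis.Analysis"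
begin

definition pd :: "'n::finite \<Rightarrow> (real^'n \<Rightarrow> real) \<Rightarrow> real^'n \<Rightarrow> real" where
  "pd i f x = frechet_derivative f (at x) (axis i 1)"

fun iter_pd :: "'n::finite list \<Rightarrow> (real^'n \<Rightarrow> real) \<Rightarrow> real^'n \<Rightarrow> real" where
  "iter_pd [] f = f"
| "iter_pd (i # is) f = pd i (iter_pd is f)"

definition smooth_on :: "(real^'n::finite \<Rightarrow> real) \<Rightarrow> (real^'n) set \<Rightarrow> bool" where
  "smooth_on f S \<longleftrightarrow> (\<forall>is. \<forall>x\<in>S. iter_pd is f differentiable (at x))"

definition smooth_boundary :: "(real^'n::finite) set \<Rightarrow> bool" where
  "smooth_boundary \<Omega> \<longleftrightarrow>
     (\<forall>p\<in>frontier \<Omega>. \<exists>U g. open U \<and> p \<in> U \<and> smooth_on g U \<and>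
        (\<forall>x\<in>U. (\<exists>i. pd i g x \<noteq> 0)) \<and>
        \<Omega> \<inter> U = {x\<in>U. g x < 0} \<and> frontier \<Omega> \<inter> U = {x\<in>U. g x = 0})"

definition sigma :: "nat \<Rightarrow> real^'n::finite \<Rightarrow> real" where
  "sigma k lam = (\<Sum>S\<in>{S. card S = k}. \<Prod>i\<in>S. lam $ i)"

definition Gamma :: "nat \<Rightarrow> (real^'n::finite) set" where
  "Gamma k = {lam. \<forall>j. 1 \<le> j \<and> j \<le> k \<longrightarrow> sigma j lam > 0}"

definition diag_mat :: "real^'n::finite \<Rightarrow> real^'n^'n" where
  "diag_mat lam = (\<chi> i j. if i = j then lam $ i else 0)"

(* lam is the vector of eigenvalues (with multiplicity, in some order) of the symmetric matrix A *)
definition eigvals :: "real^'n::finite^'n \<Rightarrow> real^'n \<Rightarrow> bool" where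
  "eigvals A lam \<longleftrightarrow> (\<exists>P. orthogonal_matrix P \<and> A = P ** diag_mat lam ** transpose P)"

definition Wmat :: "(real^'n::finite \<Rightarrow> real) \<Rightarrow> real^'n \<Rightarrow> real^'n^'n" where
  "Wmat u x = (let n = real CARD('n);
      lap = (\<Sum>i\<in>UNIV. pd i (pd i u) x);
      grad2 = (\<Sum>i\<in>UNIV. (pd i u x)^2)
    in (\<chi> i j. (n - 2) * pd i (pd j u) x - n * pd i u x * pd j u x / u x
               + (if i = j then lap + grad2 / u x else 0)))"

end

theory Submission
  imports Defs "HOL-Real_Asymp.Real_Asymp"
begin

(* Since \<Gamma>_k \<subseteq> \<Gamma>_2 for k \<ge> 2, all eigenvalues are bounded by \<sigma>_1, so \<sigma>_k^(1/k) \<le> C \<sigma>_1,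
   while \<sigma>_1 = tr W[u] = 2(n-1) \<Delta>u. Hence the equation makes u a subsolution
   \<Delta>u \<ge> c u^(1+q) with q = 4/(n-2). At the maximum point of u (R^2 - |x - x0|^2)^m on a ball
   B_R(x0) \<subseteq> \<Omega>, where m q \<ge> 2, the second-order conditions along the coordinate axes give
   the Keller-Osserman type estimate u(x0)^q \<le> K/(c R^2). Since the boundary is compact, balls of
   radius |x0| - O(1) fit into \<Omega>, so u(x0) = O(|x0|^(-2/q)). *)

section \<open>Second-order conditions at an interior maximum\<close>

lemma DERIV_local_max_second_order:
  fixes G G' :: "real \<Rightarrow> real"
  assumes d: "d > 0"
    and D1: "\<And>t. \<bar>t\<bar> < d \<Longrightarrow> (G has_real_derivative G' t) (at t)"
    and D2: "(G' has_real_derivative G2) (at 0)"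
    and mx: "\<And>t. \<bar>t\<bar> < d \<Longrightarrow> G t \<le> G 0"
  shows "G' 0 = 0" and "G2 \<le> 0"
proof -
  show G0: "G' 0 = 0"
    by (rule DERIV_local_max[OF D1[of 0] d]) (use d mx in auto)
  show "G2 \<le> 0"
  proof (rule ccontr)
    assume "\<not> G2 \<le> 0"
    then obtain e where "e > 0" and inc: "\<And>h. h > 0 \<Longrightarrow> h < e \<Longrightarrow> G' 0 < G' h"
      using DERIV_pos_inc_right[OF D2] by force
    define t where "t = min e d / 2"
    have t: "0 < t" "t < e" "t < d"
      using \<open>e > 0\<close> d by (auto simp: t_def)
    obtain z where z: "0 < z" "z < t" "G t - G 0 = t * G' z"
      using MVT2[of 0 t G G'] t D1 by force
    have "G' z > 0"
      using inc[of z] z t G0 by simp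
    then have "t * G' z > 0"
      using t by simp
    then have "G t > G 0"
      using z by simp
    with mx[of t] t show False
      by simp
  qed
qed

lemma bound_from_weighted_max_conditions:
  fixes f0 f1 f2 b s :: real and m :: nat
  defines "Q1 \<equiv> - 2 * b * real m * s ^ (m - 1)"
    and "Q2 \<equiv> real m * (real (m - 1) * s ^ (m - 2) * (2 * b)\<^sup>2 - 2 * s ^ (m - 1))"
  assumes s: "s > 0" and m: "m \<ge> 1"
    and crit: "f1 * s ^ m + f0 * Q1 = 0"
    and second: "f2 * s ^ m + 2 * f1 * Q1 + f0 * Q2 \<le> 0"
  shows "f2 \<le> f0 * ((real m ^ 2 + real m) * 4 * b\<^sup>2 / s\<^sup>2 + 2 * real m / s)"
proof -
  have pow1: "s ^ (m - 1) = s ^ m / s"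
    using s m by (simp add: power_diff)
  have pow2: "real (m - 1) * s ^ (m - 2) = (real m - 1) * (s ^ m / s\<^sup>2)"
  proof (cases "m = 1")
    case False
    then show ?thesis
      using s m by (simp add: power_diff of_nat_diff)
  qed simp
  have Q1: "Q1 = - 2 * b * real m * s ^ m / s"
    unfolding Q1_def pow1 by simp
  have Q2: "Q2 = real m * ((real m - 1) * (s ^ m / s\<^sup>2) * (2 * b)\<^sup>2 - 2 * (s ^ m / s))"
    unfolding Q2_def pow1 pow2 ..
  have f1: "f1 = 2 * real m * b * f0 / s"
    using crit s by (simp add: Q1 field_simps)
  have "f2 * s ^ m + 2 * f1 * Q1 + f0 * Q2
      = s ^ m * (f2 - f0 * ((real m ^ 2 + real m) * 4 * b\<^sup>2 / s\<^sup>2 + 2 * real m / s))"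
    unfolding f1 Q1 Q2 using s by (simp add: field_simps power2_eq_square)
  with second have "s ^ m * (f2 - f0 * ((real m ^ 2 + real m) * 4 * b\<^sup>2 / s\<^sup>2 + 2 * real m / s)) \<le> 0"
    by simp
  moreover have "s ^ m > 0"
    using s by simp
  ultimately show ?thesis
    by (simp add: mult_le_0_iff)
qed

lemma second_derivative_le_at_weighted_max:
  fixes f f' :: "real \<Rightarrow> real" and m :: nat
  assumes d: "d > 0" and m: "m \<ge> 1" and s: "s > 0"
    and D1: "\<And>t. \<bar>t\<bar> < d \<Longrightarrow> (f has_real_derivative f' t) (at t)"
    and D2: "(f' has_real_derivative f2) (at 0)"
    and mx: "\<And>t. \<bar>t\<bar> < d \<Longrightarrow> f t * (s - 2 * b * t - t\<^sup>2) ^ m \<le> f 0 * s ^ m"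
  shows "f2 \<le> f 0 * ((real m ^ 2 + real m) * 4 * b\<^sup>2 / s\<^sup>2 + 2 * real m / s)"
proof -
  define Q where "Q t = s - 2 * b * t - t\<^sup>2" for t
  define Q' where "Q' t = real m * Q t ^ (m - 1) * (- 2 * b - 2 * t)" for t
  define Q2 where "Q2 = real m * (real (m - 1) * s ^ (m - 2) * (2 * b)\<^sup>2 - 2 * s ^ (m - 1))"
  have dQ: "((\<lambda>t. Q t ^ m) has_real_derivative Q' t) (at t)" for t
    unfolding Q_def Q'_def by (auto intro!: derivative_eq_intros simp: algebra_simps)
  have dQ': "(Q' has_real_derivative Q2) (at 0)"
    unfolding Q_def Q'_def Q2_def
    by (auto intro!: derivative_eq_intros simp: algebra_simps power2_eq_square numeral_2_eq_2)
  have Q0: "Q 0 = s"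
    by (simp add: Q_def)
  have dG: "((\<lambda>t. f t * Q t ^ m) has_real_derivative f' t * Q t ^ m + f t * Q' t) (at t)"
    if "\<bar>t\<bar> < d" for t
    using DERIV_mult[OF D1[OF that] dQ] by (simp add: ac_simps)
  have dG': "((\<lambda>t. f' t * Q t ^ m + f t * Q' t) has_real_derivative
      f2 * s ^ m + f' 0 * Q' 0 + (f' 0 * Q' 0 + f 0 * Q2)) (at 0)"
    using DERIV_add[OF DERIV_mult[OF D2 dQ[of 0]] DERIV_mult[OF D1[of 0] dQ']] d
    by (simp add: Q0 ac_simps)
  have "f t * Q t ^ m \<le> f 0 * Q 0 ^ m" if "\<bar>t\<bar> < d" for t
    using mx[OF that] by (simp add: Q_def)
  from DERIV_local_max_second_order[OF d dG dG' this]
  have "f' 0 * s ^ m + f 0 * Q' 0 = 0" and "f2 * s ^ m + 2 * f' 0 * Q' 0 + f 0 * Q2 \<le> 0"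
    by (simp_all add: Q0 algebra_simps)
  moreover have "Q' 0 = - 2 * b * real m * s ^ (m - 1)"
    by (simp add: Q'_def Q0)
  ultimately show ?thesis
    using bound_from_weighted_max_conditions[OF s m] unfolding Q2_def by simp
qed

lemma has_real_derivative_along_axis:
  fixes f :: "real^'n::finite \<Rightarrow> real"
  assumes "f differentiable (at (x + t *\<^sub>R axis i 1))"
  shows "((\<lambda>s. f (x + s *\<^sub>R axis i 1)) has_real_derivative pd i f (x + t *\<^sub>R axis i 1)) (at t)"
proof -
  let ?y = "x + t *\<^sub>R axis i 1"
  let ?D = "frechet_derivative f (at ?y)"
  have f': "(f has_derivative ?D) (at ?y)"
    using assms frechet_derivative_works by blast
  have "((\<lambda>s. x + s *\<^sub>R axis i 1) has_derivative (\<lambda>h. h *\<^sub>R axis i 1)) (at t)"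
    by (auto intro!: derivative_eq_intros)
  from diff_chain_at[OF this f']
  have "((\<lambda>s. f (x + s *\<^sub>R axis i 1)) has_derivative (\<lambda>h. ?D (h *\<^sub>R axis i 1))) (at t)"
    by (simp add: o_def)
  moreover have "?D (h *\<^sub>R axis i 1) = pd i f ?y * h" for h
    using linear_scale[OF has_derivative_linear[OF f']] by (simp add: pd_def)
  ultimately show ?thesis
    by (simp add: has_field_derivative_def)
qed

lemma norm_add_scaleR_axis_power2:
  fixes y :: "real^'n::finite"
  shows "(norm (y + t *\<^sub>R axis i 1))\<^sup>2 = (norm y)\<^sup>2 + 2 * t * y $ i + t\<^sup>2"
  unfolding power2_norm_eq_inner
  by (simp add: inner_add_left inner_add_right inner_axis inner_axis' algebra_simps power2_eq_square)

lemma pd_pd_le_at_weighted_max: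
  fixes u :: "real^'n::finite \<Rightarrow> real" and x x0 :: "real^'n" and R :: real and m :: nat
  defines "s \<equiv> R\<^sup>2 - (norm (x - x0))\<^sup>2"
  assumes m: "m \<ge> 1" and x: "x \<in> ball x0 R"
    and du: "\<And>y. y \<in> ball x0 R \<Longrightarrow> u differentiable (at y)"
    and dpu: "pd i u differentiable (at x)"
    and mx: "\<And>y. y \<in> ball x0 R \<Longrightarrow> u y * (R\<^sup>2 - (norm (y - x0))\<^sup>2) ^ m \<le> u x * s ^ m"
  shows "pd i (pd i u) x \<le> u x * ((real m ^ 2 + real m) * 4 * ((x - x0) $ i)\<^sup>2 / s\<^sup>2 + 2 * real m / s)"
proof -
  define y where "y = x - x0"
  define f where "f t = u (x + t *\<^sub>R axis i 1)" for t
  define d where "d = R - norm y"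
  have "norm y < R"
    using x by (simp add: y_def dist_norm norm_minus_commute)
  then have d: "d > 0"
    by (simp add: d_def)
  have s: "s > 0"
    using \<open>norm y < R\<close> by (simp add: s_def y_def power_strict_mono)
  have in_ball: "x + t *\<^sub>R axis i 1 \<in> ball x0 R" if "\<bar>t\<bar> < d" for t
  proof -
    have "dist x0 (x + t *\<^sub>R axis i 1) = norm (y + t *\<^sub>R axis i 1)"
      by (simp add: dist_norm y_def norm_minus_commute algebra_simps)
    also have "\<dots> \<le> norm y + \<bar>t\<bar>"
      using norm_triangle_ineq[of y "t *\<^sub>R axis i 1"] by simp
    finally show ?thesis
      using that by (simp add: d_def)
  qed
  have D1: "(f has_real_derivative pd i u (x + t *\<^sub>R axis i 1)) (at t)" if "\<bar>t\<bar> < d" for t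
    unfolding f_def using du[OF in_ball[OF that]] by (rule has_real_derivative_along_axis)
  have D2: "((\<lambda>t. pd i u (x + t *\<^sub>R axis i 1)) has_real_derivative pd i (pd i u) x) (at 0)"
    using has_real_derivative_along_axis[of "pd i u" x 0 i] dpu by simp
  have "f t * (s - 2 * y $ i * t - t\<^sup>2) ^ m \<le> f 0 * s ^ m" if "\<bar>t\<bar> < d" for t
  proof -
    have "x + t *\<^sub>R axis i 1 - x0 = y + t *\<^sub>R axis i 1"
      by (simp add: y_def algebra_simps)
    then have "R\<^sup>2 - (norm (x + t *\<^sub>R axis i 1 - x0))\<^sup>2 = R\<^sup>2 - (norm (y + t *\<^sub>R axis i 1))\<^sup>2"
      by (simp only:)
    also have "\<dots> = s - 2 * y $ i * t - t\<^sup>2"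
      by (simp add: s_def norm_add_scaleR_axis_power2 flip: y_def)
    finally have "R\<^sup>2 - (norm (x + t *\<^sub>R axis i 1 - x0))\<^sup>2 = s - 2 * y $ i * t - t\<^sup>2" .
    then show ?thesis
      using mx[OF in_ball[OF that]] by (simp add: f_def)
  qed
  from second_derivative_le_at_weighted_max[OF d m s D1 D2 this]
  show ?thesis
    by (simp add: f_def y_def)
qed

section \<open>Keller-Osserman type interior estimate\<close>

definition laplacian :: "(real^'n::finite \<Rightarrow> real) \<Rightarrow> real^'n \<Rightarrow> real" where
  "laplacian u x = (\<Sum>i\<in>UNIV. pd i (pd i u) x)"

lemma laplacian_le_at_weighted_max:
  fixes u :: "real^'n::finite \<Rightarrow> real" and x x0 :: "real^'n" and R :: real and m :: nat
  defines "s \<equiv> R\<^sup>2 - (norm (x - x0))\<^sup>2"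
  assumes m: "m \<ge> 1" and x: "x \<in> ball x0 R" and ux: "u x \<ge> 0"
    and du: "\<And>y. y \<in> ball x0 R \<Longrightarrow> u differentiable (at y)"
    and dpu: "\<And>i. pd i u differentiable (at x)"
    and mx: "\<And>y. y \<in> ball x0 R \<Longrightarrow> u y * (R\<^sup>2 - (norm (y - x0))\<^sup>2) ^ m \<le> u x * s ^ m"
  shows "laplacian u x \<le> u x * (4 * (real m ^ 2 + real m) + 2 * real m * CARD('n)) * R\<^sup>2 / s\<^sup>2"
proof -
  define y where "y = x - x0"
  have "norm y < R"
    using x by (simp add: y_def dist_norm norm_minus_commute)
  then have s: "0 < s" "s \<le> R\<^sup>2" "(norm y)\<^sup>2 \<le> R\<^sup>2"
    by (auto simp: s_def y_def power_strict_mono power_mono)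
  have norm_power2_eq_sum: "(norm y)\<^sup>2 = (\<Sum>i\<in>UNIV. (y $ i)\<^sup>2)"
    unfolding power2_norm_eq_inner by (simp add: inner_vec_def power2_eq_square)
  have "laplacian u x \<le> (\<Sum>i\<in>UNIV. u x * ((real m ^ 2 + real m) * 4 * (y $ i)\<^sup>2 / s\<^sup>2 + 2 * real m / s))"
    unfolding laplacian_def y_def s_def
    by (intro sum_mono pd_pd_le_at_weighted_max[OF m x du dpu mx[unfolded s_def]])
  also have "\<dots> = u x * (4 * (real m ^ 2 + real m) * (norm y)\<^sup>2 / s\<^sup>2 + 2 * real m * CARD('n) / s)"
    by (simp add: norm_power2_eq_sum sum.distrib sum_distrib_left sum_divide_distrib add_divide_distrib algebra_simps)
  also have "\<dots> \<le> u x * (4 * (real m ^ 2 + real m) * R\<^sup>2 / s\<^sup>2 + 2 * real m * CARD('n) * R\<^sup>2 / s\<^sup>2)"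
  proof -
    have "1 / s \<le> R\<^sup>2 / s\<^sup>2"
      using s by (simp add: field_simps power2_eq_square)
    then have "2 * real m * CARD('n) / s \<le> 2 * real m * CARD('n) * R\<^sup>2 / s\<^sup>2"
      using mult_left_mono[of "1 / s" "R\<^sup>2 / s\<^sup>2" "2 * real m * CARD('n)"] by simp
    moreover have "4 * (real m ^ 2 + real m) * (norm y)\<^sup>2 / s\<^sup>2 \<le> 4 * (real m ^ 2 + real m) * R\<^sup>2 / s\<^sup>2"
      using s by (intro divide_right_mono mult_left_mono) auto
    ultimately show ?thesis
      using ux by (intro mult_left_mono add_mono)
  qed
  also have "\<dots> = u x * (4 * (real m ^ 2 + real m) + 2 * real m * CARD('n)) * R\<^sup>2 / s\<^sup>2"
    by (simp add: algebra_simps add_divide_distrib)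
  finally show ?thesis .
qed

lemma powr_le_if_weighted_max:
  fixes v a s P c K q :: real and m :: nat
  assumes v: "v > 0" and s: "0 < s" "s \<le> P" and q: "q > 0" and mq: "2 \<le> real m * q"
    and c: "c > 0" and max: "v * P ^ m \<le> a * s ^ m" and crit: "a powr q * s\<^sup>2 \<le> K * P / c"
  shows "v powr q \<le> K / (c * P)"
proof -
  define p where "p = real m * q"
  have P: "P > 0"
    using s by simp
  have "0 < v * P ^ m"
    using v P by simp
  with max have "a * s ^ m > 0"
    by linarith
  then have a: "a > 0"
    using s by (simp add: zero_less_mult_iff)
  have powr_p_split: "z powr p = z\<^sup>2 * z powr (p - 2)" if "z > 0" for z :: real
  proof -
    have "z powr p = z powr (2 + (p - 2))"
      by simp
    then show ?thesis
      using that by (simp only: powr_add powr_numeral less_imp_le)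
  qed
  have power_powr_q: "(z ^ m) powr q = z powr p" if "z > 0" for z :: real
    unfolding powr_realpow[OF that, symmetric] powr_powr p_def ..
  have "(v * P ^ m) powr q \<le> (a * s ^ m) powr q"
    using max v P q by (intro powr_mono2) auto
  then have "v powr q * P powr p \<le> a powr q * s powr p"
    using v P a s by (simp add: powr_mult power_powr_q)
  also have "\<dots> = a powr q * s\<^sup>2 * s powr (p - 2)"
    using s by (simp add: powr_p_split)
  also have "\<dots> \<le> K * P / c * P powr (p - 2)"
  proof (rule mult_mono[OF crit])
    show "s powr (p - 2) \<le> P powr (p - 2)"
      using s mq by (intro powr_mono2) (auto simp: p_def)
    show "0 \<le> K * P / c"
      using crit order.trans[of 0 "a powr q * s\<^sup>2"] by simp
  qed simp
  finally have "(v powr q * P\<^sup>2) * P powr (p - 2) \<le> (K * P / c) * P powr (p - 2)"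
    using P by (simp add: powr_p_split mult.assoc)
  then have "v powr q * P\<^sup>2 \<le> K * P / c"
    by (rule mult_right_le_imp_le) (use P in simp)
  then have "(v powr q * P) * P \<le> K / c * P"
    by (simp add: power2_eq_square algebra_simps)
  then have "v powr q * P \<le> K / c"
    by (rule mult_right_le_imp_le) (use P in simp)
  then show ?thesis
    using P c by (simp add: pos_le_divide_eq mult_ac)
qed

lemma weighted_max_in_ball:
  fixes u :: "'a::euclidean_space \<Rightarrow> real" and m :: nat
  assumes R: "R > 0" and m: "m \<ge> 1" and cont: "continuous_on (cball x0 R) u" and pos: "u x0 > 0"
  obtains x where "x \<in> ball x0 R" and "u x > 0"
    and "\<And>y. y \<in> cball x0 R \<Longrightarrow>
           u y * (R\<^sup>2 - (norm (y - x0))\<^sup>2) ^ m \<le> u x * (R\<^sup>2 - (norm (x - x0))\<^sup>2) ^ m"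
proof -
  define S where "S y = R\<^sup>2 - (norm (y - x0))\<^sup>2" for y
  have "continuous_on (cball x0 R) (\<lambda>y. u y * S y ^ m)"
    unfolding S_def by (intro continuous_intros cont)
  moreover have "cball x0 R \<noteq> {}"
    using R by simp
  ultimately obtain x where x: "x \<in> cball x0 R"
    and mx: "\<And>y. y \<in> cball x0 R \<Longrightarrow> u y * S y ^ m \<le> u x * S x ^ m"
    using continuous_attains_sup[OF compact_cball] by blast
  have "x0 \<in> cball x0 R"
    using R by simp
  then have "u x0 * S x0 ^ m \<le> u x * S x ^ m"
    by (rule mx)
  moreover have "0 < u x0 * S x0 ^ m"
    using pos R by (simp add: S_def)
  ultimately have F: "0 < u x * S x ^ m"
    by linarith
  have "S x \<ge> 0"
    using x by (simp add: S_def dist_norm norm_minus_commute power_mono)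
  moreover have "S x \<noteq> 0"
    using F m by (auto simp: power_0_left)
  ultimately have "S x > 0"
    by simp
  with F have "u x > 0"
    by (simp add: zero_less_mult_iff)
  from \<open>S x > 0\<close> have "x \<in> ball x0 R"
    using R by (simp add: S_def dist_norm norm_minus_commute power2_less_imp_less)
  with \<open>u x > 0\<close> mx show thesis
    by (intro that) (auto simp: S_def)
qed

lemma powr_le_at_center_if_laplacian_ge:
  fixes u :: "real^'n::finite \<Rightarrow> real" and x0 :: "real^'n" and m :: nat
  defines "K \<equiv> 4 * (real m ^ 2 + real m) + 2 * real m * CARD('n)"
  assumes R: "R > 0" and m: "m \<ge> 1" and q: "q > 0" and mq: "2 \<le> real m * q" and c: "c > 0"
    and du: "\<And>x. x \<in> cball x0 R \<Longrightarrow> u differentiable (at x)"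
    and dpu: "\<And>x i. x \<in> ball x0 R \<Longrightarrow> pd i u differentiable (at x)"
    and lap: "\<And>x. x \<in> ball x0 R \<Longrightarrow> c * u x powr (1 + q) \<le> laplacian u x"
    and pos: "u x0 > 0"
  shows "u x0 powr q \<le> K / (c * R\<^sup>2)"
proof -
  have "continuous_on (cball x0 R) u"
    using du by (meson continuous_at_imp_continuous_on differentiable_imp_continuous_within)
  then obtain x where x: "x \<in> ball x0 R" and a: "u x > 0"
    and mx: "\<And>y. y \<in> cball x0 R \<Longrightarrow>
               u y * (R\<^sup>2 - (norm (y - x0))\<^sup>2) ^ m \<le> u x * (R\<^sup>2 - (norm (x - x0))\<^sup>2) ^ m"
    using weighted_max_in_ball[OF R m, of x0 u] pos by blast
  define s where "s = R\<^sup>2 - (norm (x - x0))\<^sup>2"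
  have s: "0 < s" "s \<le> R\<^sup>2"
    using x by (auto simp: s_def dist_norm norm_minus_commute power_strict_mono)
  have "laplacian u x \<le> u x * K * R\<^sup>2 / s\<^sup>2"
    unfolding s_def K_def
    by (rule laplacian_le_at_weighted_max[OF m x]) (use a x du dpu mx in auto)
  with lap[OF x] have "c * u x powr (1 + q) \<le> u x * K * R\<^sup>2 / s\<^sup>2"
    by simp
  moreover have "u x powr (1 + q) = u x * u x powr q"
    using a by (simp add: powr_add)
  ultimately have "u x * (c * u x powr q) \<le> u x * (K * R\<^sup>2 / s\<^sup>2)"
    by (simp only: mult.left_commute[of c] times_divide_eq_right mult.assoc)
  then have "c * u x powr q \<le> K * R\<^sup>2 / s\<^sup>2"
    using a by (rule mult_left_le_imp_le)
  then have "u x powr q * s\<^sup>2 \<le> K * R\<^sup>2 / c"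
    using s c by (simp add: field_simps)
  moreover have "u x0 * (R\<^sup>2) ^ m \<le> u x * s ^ m"
    using mx[of x0] R by (simp add: s_def)
  ultimately show ?thesis
    using powr_le_if_weighted_max[OF pos s(1) s(2) q mq c] by blast
qed

section \<open>Elementary symmetric functions and the trace of \<open>W[u]\<close>\<close>

lemma sigma_1_eq_sum: "sigma 1 (lam::real^'n::finite) = (\<Sum>i\<in>UNIV. lam $ i)"
proof -
  have "{S::'n set. card S = 1} = (\<lambda>i. {i}) ` UNIV"
    by (auto simp: card_1_singleton_iff)
  then show ?thesis
    unfolding sigma_def by (simp add: sum.reindex inj_on_def)
qed

lemma sigma_1_power2:
  "(sigma 1 (lam::real^'n::finite))\<^sup>2 = (\<Sum>i\<in>UNIV. (lam $ i)\<^sup>2) + 2 * sigma 2 lam"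
proof -
  define P where "P = {(i::'n, j). i \<noteq> j}"
  define h where "h = (\<lambda>(i, j). lam $ i * lam $ j)"
  have "(sigma 1 lam)\<^sup>2 = (\<Sum>p\<in>UNIV. h p)"
    unfolding sigma_1_eq_sum power2_eq_square sum_product
    by (simp add: h_def sum.cartesian_product)
  also have "\<dots> = (\<Sum>p\<in>{(i, j). i = j}. h p) + (\<Sum>p\<in>P. h p)"
  proof -
    have "UNIV = {(i::'n, j). i = j} \<union> P" "{(i::'n, j). i = j} \<inter> P = {}"
      by (auto simp: P_def)
    then show ?thesis
      by (metis finite sum.union_disjoint)
  qed
  also have "(\<Sum>p\<in>{(i, j). i = j}. h p) = (\<Sum>i\<in>UNIV. (lam $ i)\<^sup>2)"
  proof -
    have "{(i::'n, j). i = j} = (\<lambda>i. (i, i)) ` UNIV"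
      by auto
    then show ?thesis
      by (simp add: sum.reindex inj_on_def h_def power2_eq_square)
  qed
  also have "(\<Sum>p\<in>P. h p) = 2 * sigma 2 lam"
  proof -
    have "sum h {p \<in> P. (\<lambda>(i, j). {i, j}) p = T} = 2 * (\<Prod>i\<in>T. lam $ i)"
      if "card T = 2" for T :: "'n set"
    proof -
      obtain a b where ab: "T = {a, b}" "a \<noteq> b"
        using \<open>card T = 2\<close> card_2_iff by metis
      then have "{p \<in> P. (\<lambda>(i, j). {i, j}) p = T} = {(a, b), (b, a)}"
        by (auto simp: P_def doubleton_eq_iff)
      then show ?thesis
        using ab by (simp add: h_def)
    qed
    moreover have "(\<Sum>T\<in>{S::'n set. card S = 2}. sum h {p \<in> P. (\<lambda>(i, j). {i, j}) p = T}) = sum h P"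
      by (rule sum.group) (auto simp: P_def)
    ultimately show ?thesis
      by (simp add: sigma_def sum_distrib_left)
  qed
  finally show ?thesis .
qed

lemma abs_le_sigma_1_if_Gamma_2:
  assumes "(lam::real^'n::finite) \<in> Gamma 2"
  shows "\<bar>lam $ i\<bar> \<le> sigma 1 lam"
proof -
  have pos: "sigma 1 lam > 0" "sigma 2 lam > 0"
    using assms by (auto simp: Gamma_def)
  have "(lam $ i)\<^sup>2 \<le> (\<Sum>i\<in>UNIV. (lam $ i)\<^sup>2)"
    by (rule member_le_sum) auto
  also have "\<dots> \<le> (sigma 1 lam)\<^sup>2"
    using sigma_1_power2[of lam] pos by linarith
  finally show ?thesis
    using pos by (metis abs_le_square_iff abs_of_pos)
qed

lemma sigma_le_sigma_1_power:
  assumes lam: "(lam::real^'n::finite) \<in> Gamma k" and k: "1 \<le> k"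
  shows "sigma k lam \<le> 2 ^ CARD('n) * sigma 1 lam ^ k"
proof (cases "k = 1")
  case True
  then show ?thesis
    using lam by (auto simp: Gamma_def intro: order.trans[of _ "sigma 1 lam"])
next
  case False
  then have "lam \<in> Gamma 2"
    using lam k by (auto simp: Gamma_def)
  have "(\<Prod>i\<in>S. lam $ i) \<le> sigma 1 lam ^ k" if "card S = k" for S :: "'n set"
  proof -
    have "(\<Prod>i\<in>S. lam $ i) \<le> (\<Prod>i\<in>S. \<bar>lam $ i\<bar>)"
      by (metis abs_ge_self abs_prod)
    also have "\<dots> \<le> (\<Prod>i\<in>S. sigma 1 lam)"
      using abs_le_sigma_1_if_Gamma_2[OF \<open>lam \<in> Gamma 2\<close>] by (intro prod_mono) auto
    finally show ?thesis
      using that by simp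
  qed
  then have "sigma k lam \<le> (\<Sum>S\<in>{S::'n set. card S = k}. sigma 1 lam ^ k)"
    unfolding sigma_def[of k] by (intro sum_mono) simp
  also have "\<dots> = real (card {S::'n set. card S = k}) * sigma 1 lam ^ k"
    by simp
  also have "\<dots> \<le> 2 ^ CARD('n) * sigma 1 lam ^ k"
  proof (rule mult_right_mono)
    have "card {S::'n set. card S = k} \<le> card (Pow (UNIV::'n set))"
      by (rule card_mono) auto
    then show "real (card {S::'n set. card S = k}) \<le> 2 ^ CARD('n)"
      by (simp add: card_Pow)
    show "0 \<le> sigma 1 lam ^ k"
      using lam k by (auto simp: Gamma_def)
  qed
  finally show ?thesis .
qed

lemma sigma_root_le_sigma_1:
  assumes lam: "(lam::real^'n::finite) \<in> Gamma k" and k: "1 \<le> k"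
  shows "sigma k lam powr (1 / real k) \<le> 2 ^ CARD('n) * sigma 1 lam"
proof -
  have pos: "sigma 1 lam > 0" "sigma k lam > 0"
    using lam k by (auto simp: Gamma_def)
  have "sigma k lam powr (1 / real k) \<le> (2 ^ CARD('n) * sigma 1 lam ^ k) powr (1 / real k)"
    using sigma_le_sigma_1_power[OF lam k] pos by (intro powr_mono2) auto
  also have "\<dots> = (2 ^ CARD('n)) powr (1 / real k) * sigma 1 lam"
  proof -
    have "(sigma 1 lam ^ k) powr (1 / real k) = sigma 1 lam"
      unfolding powr_realpow[OF pos(1), symmetric] powr_powr using k pos(1) by simp
    then show ?thesis
      using pos by (simp add: powr_mult)
  qed
  also have "\<dots> \<le> 2 ^ CARD('n) * sigma 1 lam"
  proof -
    have "(2 ^ CARD('n) :: real) powr (1 / real k) \<le> (2 ^ CARD('n)) powr 1"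
      using k by (intro powr_mono) auto
    then show ?thesis
      using pos by simp
  qed
  finally show ?thesis .
qed

lemma trace_eq_sigma_1_if_eigvals:
  assumes "eigvals (A::real^'n::finite^'n) lam"
  shows "trace A = sigma 1 lam"
proof -
  obtain P where P: "orthogonal_matrix P" "A = P ** diag_mat lam ** transpose P"
    using assms eigvals_def by blast
  have "trace A = trace ((diag_mat lam ** transpose P) ** P)"
    using trace_mul_sym[of P "diag_mat lam ** transpose P"] by (simp add: P matrix_mul_assoc)
  also have "\<dots> = trace (diag_mat lam)"
    using P(1) by (simp add: matrix_mul_assoc[symmetric] orthogonal_matrix)
  also have "\<dots> = (\<Sum>i\<in>UNIV. lam $ i)"
    by (simp add: trace_def diag_mat_def)
  also have "\<dots> = sigma 1 lam"
    by (rule sigma_1_eq_sum[symmetric])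
  finally show ?thesis .
qed

lemma trace_Wmat:
  "trace (Wmat (u::real^'n::finite \<Rightarrow> real) x) = 2 * (real CARD('n) - 1) * laplacian u x"
proof -
  let ?n = "real CARD('n)"
  let ?g = "\<Sum>i\<in>UNIV. (pd i u x)\<^sup>2"
  have "trace (Wmat u x)
      = (\<Sum>i\<in>UNIV. (?n - 2) * pd i (pd i u) x - ?n * (pd i u x)\<^sup>2 / u x + (laplacian u x + ?g / u x))"
    by (simp add: trace_def Wmat_def laplacian_def Let_def power2_eq_square mult.assoc)
  also have "\<dots> = (?n - 2) * laplacian u x - ?n * ?g / u x + ?n * (laplacian u x + ?g / u x)"
    by (simp add: laplacian_def sum.distrib sum_subtractf sum_distrib_left sum_divide_distrib)
  also have "\<dots> = 2 * (?n - 1) * laplacian u x"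
    by (simp add: algebra_simps)
  finally show ?thesis .
qed

lemma sigma_root_le_laplacian:
  fixes u :: "real^'n::finite \<Rightarrow> real"
  assumes k: "1 \<le> k" and lam: "eigvals (Wmat u x) lam" "lam \<in> Gamma k"
  shows "sigma k lam powr (1 / real k) \<le> 2 ^ CARD('n) * (2 * (real CARD('n) - 1) * laplacian u x)"
  using sigma_root_le_sigma_1[OF lam(2) k] trace_eq_sigma_1_if_eigvals[OF lam(1)] by (simp add: trace_Wmat)

section \<open>Decay at infinity\<close>

lemma cball_subset_if_frontier_bounded:
  fixes \<Omega> :: "'a::real_normed_vector set"
  assumes x: "x \<in> \<Omega>" and r: "0 \<le> r" "r < norm x - M"
    and M: "\<And>z. z \<in> frontier \<Omega> \<Longrightarrow> norm z \<le> M"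
  shows "cball x r \<subseteq> \<Omega>"
proof (rule ccontr)
  assume "\<not> cball x r \<subseteq> \<Omega>"
  then have "cball x r - \<Omega> \<noteq> {}"
    by blast
  moreover have "x \<in> cball x r \<inter> \<Omega>"
    using x r by simp
  ultimately have "cball x r \<inter> frontier \<Omega> \<noteq> {}"
    by (intro connected_Int_frontier[OF connected_cball]) blast+
  then obtain z where z: "z \<in> frontier \<Omega>" "dist x z \<le> r"
    by auto
  have "norm x \<le> norm z + dist x z"
    by (metis dist_norm norm_triangle_sub)
  then show False
    using z M[OF z(1)] r by linarith
qed

lemma tendsto_0_if_powr_le_inverse_square:
  fixes u :: "'a::real_normed_vector \<Rightarrow> real"
  assumes q: "q > 0" and C: "C \<ge> 0" and pos: "\<And>x. x \<in> S \<Longrightarrow> u x > 0"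
    and bound: "\<And>x. x \<in> S \<Longrightarrow> M < norm x \<Longrightarrow> u x powr q \<le> C / (norm x - M)\<^sup>2"
  shows "(u \<longlongrightarrow> 0) (inf at_infinity (principal S))"
proof -
  let ?F = "inf at_infinity (principal S)"
  define g where "g r = (C / (r - M)\<^sup>2) powr (1 / q)" for r
  have "(g \<longlongrightarrow> 0) at_top"
    unfolding g_def using q C
    by (intro tendsto_zero_powrI[where b = "1 / q"]) (real_asymp, auto)
  moreover have "filterlim norm at_top ?F"
    using filterlim_mono[OF filterlim_norm_at_top order_refl inf_le1] .
  ultimately have g_lim: "((\<lambda>x. g (norm x)) \<longlongrightarrow> 0) ?F"
    by (rule filterlim_compose)
  have "\<forall>\<^sub>F x in ?F. 0 \<le> u x"
    unfolding eventually_inf_principal using pos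
    by (intro always_eventually) (auto intro: less_imp_le)
  moreover have "u x \<le> g (norm x)" if "x \<in> S" "M + 1 \<le> norm x" for x
  proof -
    have "u x = (u x powr q) powr (1 / q)"
      using pos[OF that(1)] q by (simp add: powr_powr)
    also have "\<dots> \<le> g (norm x)"
      unfolding g_def using bound[OF that(1)] that(2) q by (intro powr_mono2) auto
    finally show ?thesis .
  qed
  then have "\<forall>\<^sub>F x in ?F. u x \<le> g (norm x)"
    unfolding eventually_inf_principal eventually_at_infinity by blast
  ultimately show ?thesis
    using tendsto_sandwich[OF _ _ tendsto_const g_lim] by blast
qed

lemma tendsto_0_if_laplacian_ge_power:
  fixes u :: "real^'n::finite \<Rightarrow> real"
  assumes bdd: "bounded (frontier \<Omega>)" and q: "q > 0" and c: "c > 0"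
    and du: "\<And>x. x \<in> \<Omega> \<Longrightarrow> u differentiable (at x)"
    and dpu: "\<And>x i. x \<in> \<Omega> \<Longrightarrow> pd i u differentiable (at x)"
    and lap: "\<And>x. x \<in> \<Omega> \<Longrightarrow> c * u x powr (1 + q) \<le> laplacian u x"
    and pos: "\<And>x. x \<in> \<Omega> \<Longrightarrow> u x > 0"
  shows "(u \<longlongrightarrow> 0) (inf at_infinity (principal \<Omega>))"
proof -
  define m where "m = nat \<lceil>2 / q\<rceil>"
  define K where "K = 4 * (real m ^ 2 + real m) + 2 * real m * CARD('n)"
  have "2 / q \<le> real m"
    unfolding m_def by linarith
  then have mq: "2 \<le> real m * q"
    using q by (simp add: pos_divide_le_eq)
  then have m: "1 \<le> m"
    by (cases m) auto
  obtain M where M: "\<And>z. z \<in> frontier \<Omega> \<Longrightarrow> norm z \<le> M"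
    using bdd by (auto simp: bounded_iff)
  have "u x powr q \<le> (K / c) / (norm x - (M + 1))\<^sup>2" if x: "x \<in> \<Omega>" "M + 1 < norm x" for x
  proof -
    define R where "R = norm x - (M + 1)"
    have R: "R > 0" and cball: "cball x R \<subseteq> \<Omega>"
      using cball_subset_if_frontier_bounded[OF x(1) _ _ M, of R] x(2) by (auto simp: R_def)
    then have ball: "ball x R \<subseteq> \<Omega>"
      using ball_subset_cball by blast
    have "u x powr q \<le> K / (c * R\<^sup>2)"
      unfolding K_def
      by (rule powr_le_at_center_if_laplacian_ge[OF R m q mq c]) (use cball ball du dpu lap pos x in auto)
    then show ?thesis
      by (simp add: R_def)
  qed
  moreover have "K / c \<ge> 0"
    using c by (simp add: K_def)
  ultimately show ?thesis
    using tendsto_0_if_powr_le_inverse_square[OF q, of "K / c" \<Omega> u "M + 1"] pos by blast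
qed

theorem corollary2p7:
  fixes \<Omega> :: "(real^'n) set" and u :: "real^'n \<Rightarrow> real" and k :: nat
  assumes "CARD('n) \<ge> 3"
    and "1 \<le> k" and "k \<le> CARD('n)"
    and "open \<Omega>" and "connected \<Omega>" and "\<Omega> \<noteq> {}" and "\<not> bounded \<Omega>"
    and "compact (frontier \<Omega>)" and "smooth_boundary \<Omega>"
    and "smooth_on u \<Omega>" and "\<forall>x\<in>\<Omega>. u x > 0"
    and "\<forall>x\<in>\<Omega>. \<exists>lam. eigvals (Wmat u x) lam \<and> lam \<in> Gamma k \<and>
           sigma k lam powr (1 / real k)
             = (real CARD('n) - 2) / 2 * u x powr ((real CARD('n) + 2) / (real CARD('n) - 2))"
  shows "(u \<longlongrightarrow> 0) (inf at_infinity (principal \<Omega>))"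
proof -
  define n where "n = real CARD('n)"
  define q where "q = 4 / (n - 2)"
  define c where "c = (n - 2) / 2 / (2 ^ CARD('n) * (2 * (n - 1)))"
  have n: "n - 2 > 0"
    using assms(1) by (simp add: n_def)
  have "c * u x powr (1 + q) \<le> laplacian u x" if x: "x \<in> \<Omega>" for x
  proof -
    obtain lam where lam: "eigvals (Wmat u x) lam" "lam \<in> Gamma k"
      and eq: "sigma k lam powr (1 / real k) = (n - 2) / 2 * u x powr ((n + 2) / (n - 2))"
      using assms(12) x unfolding n_def by blast
    have "(n + 2) / (n - 2) = 1 + q"
      using n by (simp add: q_def field_simps)
    with eq sigma_root_le_laplacian[OF assms(2) lam]
    have "(n - 2) / 2 * u x powr (1 + q) \<le> 2 ^ CARD('n) * (2 * (n - 1) * laplacian u x)"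
      by (simp add: n_def)
    then show ?thesis
      using n by (simp add: c_def field_simps)
  qed
  moreover have "u differentiable (at x)" "pd i u differentiable (at x)" if "x \<in> \<Omega>" for x i
    using assms(10) that iter_pd.simps unfolding smooth_on_def by metis+
  moreover have "q > 0" "c > 0"
    using n by (simp_all add: q_def c_def)
  ultimately show ?thesis
    using tendsto_0_if_laplacian_ge_power compact_imp_bounded[OF assms(8)] assms(11) by blast
qed

end
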